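(* Let $\mathcal F,\mathcal G$ be weighted species with coefficients $f_n=[z^n]\mathcal F(z)$ and $g_n=[z^n]\mathcal G(z)$, both positive for all sufficiently large $n$. Suppose $\mathcal G$ has radius of convergence $\rho_{\mathcal G}\in(0,\infty)$, that $g_n/g_{n+1}\to\rho_{\mathcal G}$ and $\frac1{g_n}\sum_{i+j=n}g_ig_j\to2\mathcal G(\rho_{\mathcal G})<\infty$, and that $f_n=o(g_n)$. Let $\mathsf S_n$ be an $n$-sized $\mathcal F\mathcal G$-structure (on label set $\{1,\dots,n\}$) drawn with probability proportional to its weight. Then $$[z^n]\mathcal F(z)\mathcal G(z)\sim\mathcal F(\rho_{\mathcal G})\,g_n,$$ and the $\mathcal F$-component of $\mathsf S_n$, relabelled order-preservingly onto $\{1,\dots,|\cdot|\}$, converges in distribution to a Boltzmann distributed $\mathcal F$-object with parameter $\rho_{\mathcal G}$.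
   Context: A weighted species $\mathcal F$ assigns to each finite set $U$ a finite set $\mathcal F[U]$ of structures, each with a nonnegative weight, compatibly with relabelling along bijections; $[z^n]\mathcal F(z)$ is $1/n!$ times the total weight of $\mathcal F[\{1,\dots,n\}]$ and $\mathcal F(z)$ is the exponential generating series. An $\mathcal F\mathcal G$-structure on $U$ is a pair consisting of an $\mathcal F$-structure on $U_1$ and a $\mathcal G$-structure on $U_2$ with $U=U_1\sqcup U_2$, weight the product; its components are the two parts. For $\rho>0$ with $\mathcal F(\rho)<\infty$, the Boltzmann distribution with parameter $\rho$ selects $F\in\mathcal F[\{1,\dots,m\}]$, $m\ge0$, with probability $\omega(F)\rho^m/(m!\,\mathcal F(\rho))$, $\omega(F)$ the weight. *)

theory Defs
  imports "HOL-Analysis.Analysis" "HOL-Library.Landau_Symbols"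
begin

definition weighted_species ::
  "(nat set \<Rightarrow> 'a set) \<Rightarrow> ((nat \<Rightarrow> nat) \<Rightarrow> 'a \<Rightarrow> 'a) \<Rightarrow> ('a \<Rightarrow> real) \<Rightarrow> bool" where
  "weighted_species S tr w \<longleftrightarrow>
     (\<forall>U. finite U \<longrightarrow> finite (S U)) \<and>
     (\<forall>x. 0 \<le> w x) \<and>
     (\<forall>U V \<sigma>. finite U \<and> bij_betw \<sigma> U V \<longrightarrow>
        (\<forall>x\<in>S U. tr \<sigma> x \<in> S V \<and> w (tr \<sigma> x) = w x)) \<and>
     (\<forall>U x. finite U \<and> x \<in> S U \<longrightarrow> tr id x = x) \<and>
     (\<forall>U V W \<sigma> \<tau> x. finite U \<and> bij_betw \<sigma> U V \<and> bij_betw \<tau> V W \<and> x \<in> S U \<longrightarrow>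
        tr (\<tau> \<circ> \<sigma>) x = tr \<tau> (tr \<sigma> x)) \<and>
     (\<forall>U \<sigma> \<sigma>' x. finite U \<and> x \<in> S U \<and> (\<forall>i\<in>U. \<sigma> i = \<sigma>' i) \<longrightarrow>
        tr \<sigma> x = tr \<sigma>' x)"

definition egf_coeff :: "(nat set \<Rightarrow> 'a set) \<Rightarrow> ('a \<Rightarrow> real) \<Rightarrow> nat \<Rightarrow> real" where
  "egf_coeff S w n = (\<Sum>x\<in>S {1..n}. w x) / fact n"

definition egf_val :: "(nat set \<Rightarrow> 'a set) \<Rightarrow> ('a \<Rightarrow> real) \<Rightarrow> real \<Rightarrow> real" where
  "egf_val S w z = (\<Sum>n. egf_coeff S w n * z ^ n)"

definition prod_coeff :: "(nat \<Rightarrow> real) \<Rightarrow> (nat \<Rightarrow> real) \<Rightarrow> nat \<Rightarrow> real" where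
  "prod_coeff f g n = (\<Sum>i\<le>n. f i * g (n - i))"

definition prod_structs ::
  "(nat set \<Rightarrow> 'a set) \<Rightarrow> (nat set \<Rightarrow> 'b set) \<Rightarrow> nat \<Rightarrow> (nat set \<times> 'a \<times> 'b) set" where
  "prod_structs SF SG n =
     {(U, x, y). U \<subseteq> {1..n} \<and> x \<in> SF U \<and> y \<in> SG ({1..n} - U)}"

text \<open>The order-preserving bijection from a finite set U of naturals onto {1..card U}.\<close>
definition rank :: "nat set \<Rightarrow> nat \<Rightarrow> nat" where
  "rank U i = card {j\<in>U. j \<le> i}"

text \<open>Expectation of h applied to the relabelled F-component (recorded together with
  its size) of the random FG-structure S_n drawn proportionally to its weight.\<close>
definition comp_expect ::
  "(nat set \<Rightarrow> 'a set) \<Rightarrow> ((nat \<Rightarrow> nat) \<Rightarrow> 'a \<Rightarrow> 'a) \<Rightarrow> ('a \<Rightarrow> real) \<Rightarrow>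
   (nat set \<Rightarrow> 'b set) \<Rightarrow> ('b \<Rightarrow> real) \<Rightarrow> nat \<Rightarrow> (nat \<times> 'a \<Rightarrow> real) \<Rightarrow> real" where
  "comp_expect SF trF wF SG wG n h =
     (\<Sum>(U, x, y)\<in>prod_structs SF SG n. wF x * wG y * h (card U, trF (rank U) x))
     / (\<Sum>(U, x, y)\<in>prod_structs SF SG n. wF x * wG y)"

definition boltzmann_expect ::
  "(nat set \<Rightarrow> 'a set) \<Rightarrow> ('a \<Rightarrow> real) \<Rightarrow> real \<Rightarrow> (nat \<times> 'a \<Rightarrow> real) \<Rightarrow> real" where
  "boltzmann_expect S w \<rho> h =
     (\<Sum>m. \<Sum>x\<in>S {1..m}. h (m, x) * w x * \<rho> ^ m / (fact m * egf_val S w \<rho>))"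

end

theory Submission
  imports Defs
begin

text \<open>Write [z^n] F(z)G(z) / g_n = \<Sum>_i f_i g_(n-i) / g_n. For each fixed i the ratio condition gives
  g_(n-i)/g_n \<rightarrow> \<rho>^i, so the first N terms tend to \<Sum>_(i<N) f_i \<rho>^i. Since f_i \<le> \<epsilon> g_i for
  i \<ge> N, the remaining terms are at most \<epsilon> \<Sum>_i g_i g_(n-i) / g_n, which stays bounded by the
  convolution hypothesis; hence the quotient tends to F(\<rho>). The same argument applies to the
  coefficients of F reweighted by a bounded test function h. Choosing the label set of the
  F-component contributes a binomial coefficient that is absorbed by the factorials of the
  exponential generating series, so the expectation of h under the relabelled F-component is
  the quotient of the two convolution coefficients, and it tends to the Boltzmann expectation.\<close>

lemma tendsto_quotient_diff_power:
  fixes g :: "nat \<Rightarrow> real"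
  assumes gpos: "eventually (\<lambda>n. g n > 0) at_top"
    and ratio: "(\<lambda>n. g n / g (Suc n)) \<longlonglongrightarrow> \<rho>"
  shows "(\<lambda>n. g (n - k) / g n) \<longlonglongrightarrow> \<rho> ^ k"
proof -
  have "(\<lambda>n. g n / g (n + k)) \<longlonglongrightarrow> \<rho> ^ k"
  proof (induction k)
    case 0
    have "eventually (\<lambda>n. 1 = g n / g (n + 0)) at_top"
      using gpos by eventually_elim simp
    then show ?case by (simp add: Lim_transform_eventually[OF tendsto_const])
  next
    case (Suc k)
    have step: "(\<lambda>n. g (n + k) / g (Suc (n + k))) \<longlonglongrightarrow> \<rho>"
      using LIMSEQ_ignore_initial_segment[OF ratio, of k] by (simp add: add.commute)
    have "eventually (\<lambda>n. g n / g (n + k) * (g (n + k) / g (Suc (n + k)))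
        = g n / g (n + Suc k)) at_top"
      using sequentially_offset[OF gpos, of k] by eventually_elim simp
    from Lim_transform_eventually[OF tendsto_mult[OF Suc step] this] show ?case
      by (simp add: mult.commute)
  qed
  then have "(\<lambda>n. g (n + k - k) / g (n + k)) \<longlonglongrightarrow> \<rho> ^ k" by simp
  then show ?thesis by (rule LIMSEQ_offset)
qed

lemma LIMSEQ_approximation:
  fixes X :: "nat \<Rightarrow> real"
  assumes "\<And>e. e > 0 \<Longrightarrow> \<exists>Y l. Y \<longlonglongrightarrow> l \<and> \<bar>l - L\<bar> \<le> e \<and> eventually (\<lambda>n. \<bar>X n - Y n\<bar> \<le> e) at_top"
  shows "X \<longlonglongrightarrow> L"
proof (rule LIMSEQ_I)
  fix r :: real assume "r > 0"
  then obtain Y l where Y: "Y \<longlonglongrightarrow> l" "\<bar>l - L\<bar> \<le> r/4" "eventually (\<lambda>n. \<bar>X n - Y n\<bar> \<le> r/4) at_top"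
    using assms[of "r/4"] by auto
  have "eventually (\<lambda>n. dist (Y n) l < r/4) at_top"
    using \<open>r > 0\<close> by (intro Y(1)[unfolded tendsto_iff, rule_format]) simp
  then have "eventually (\<lambda>n. norm (X n - L) < r) at_top"
    using Y(3) by eventually_elim (use Y(2) in \<open>auto simp: dist_real_def abs_if split: if_splits\<close>)
  then show "\<exists>no. \<forall>n\<ge>no. norm (X n - L) < r" by (simp add: eventually_sequentially)
qed

lemma suminf_diff_initial_abs_le:
  fixes b d :: "nat \<Rightarrow> real"
  assumes b: "summable b" and d: "summable d" and d0: "\<And>n. 0 \<le> d n"
    and bound: "\<And>n. n \<ge> N \<Longrightarrow> \<bar>b n\<bar> \<le> c * d n" and c: "0 \<le> c"
  shows "\<bar>suminf b - (\<Sum>n<N. b n)\<bar> \<le> c * suminf d"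
proof -
  have dN: "summable (\<lambda>n. d (n + N))"
    using d by (rule summable_ignore_initial_segment)
  have "\<bar>suminf b - (\<Sum>n<N. b n)\<bar> = \<bar>\<Sum>n. b (n + N)\<bar>"
    using suminf_split_initial_segment[OF b, of N] by simp
  also have "\<dots> \<le> (\<Sum>n. c * d (n + N))"
    using norm_suminf_le[of "\<lambda>n. b (n + N)" "\<lambda>n. c * d (n + N)"] bound dN by (simp add: summable_mult)
  also have "\<dots> = c * (suminf d - (\<Sum>n<N. d n))"
    using suminf_mult[OF dN, of c] suminf_split_initial_segment[OF d, of N] by simp
  also have "\<dots> \<le> c * suminf d"
    using c d0 by (intro mult_left_mono) (auto intro: sum_nonneg)
  finally show ?thesis .
qed

lemma prod_coeff_diff_initial_abs_le:
  fixes a g :: "nat \<Rightarrow> real"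
  assumes "N \<le> n" and g0: "\<And>n. 0 \<le> g n"
    and bound: "\<And>i. i \<ge> N \<Longrightarrow> \<bar>a i\<bar> \<le> c * g i" and c: "0 \<le> c"
  shows "\<bar>prod_coeff a g n - (\<Sum>i<N. a i * g (n - i))\<bar> \<le> c * prod_coeff g g n"
proof -
  have "prod_coeff a g n = (\<Sum>i<N. a i * g (n - i)) + (\<Sum>i\<in>{N..n}. a i * g (n - i))"
    unfolding prod_coeff_def using \<open>N \<le> n\<close>
    by (subst sum.union_disjoint[symmetric]) (auto intro!: sum.cong)
  then have "\<bar>prod_coeff a g n - (\<Sum>i<N. a i * g (n - i))\<bar> = \<bar>\<Sum>i\<in>{N..n}. a i * g (n - i)\<bar>"
    by simp
  also have "\<dots> \<le> (\<Sum>i\<in>{N..n}. c * (g i * g (n - i)))"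
    using bound g0 by (intro order.trans[OF sum_abs sum_mono])
      (simp add: abs_mult mult.assoc[symmetric] mult_right_mono)
  also have "\<dots> \<le> c * prod_coeff g g n"
    unfolding prod_coeff_def sum_distrib_left[symmetric] using c g0
    by (intro mult_left_mono sum_mono2) auto
  finally show ?thesis .
qed

lemma summable_mult_power_bigo:
  fixes a g :: "nat \<Rightarrow> real"
  assumes "a \<in> O(g)" and "\<And>n. 0 \<le> g n" and "0 \<le> \<rho>" and "summable (\<lambda>n. g n * \<rho> ^ n)"
  shows "summable (\<lambda>n. a n * \<rho> ^ n)"
  using assms(2-)
  by (intro summable_comparison_test_bigo[OF _ landau_o.big.mult_right[OF assms(1)]]) simp

lemma prod_coeff_quotient_tendsto_suminf:
  fixes a g :: "nat \<Rightarrow> real"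
  assumes g0: "\<And>n. 0 \<le> g n"
    and gpos: "eventually (\<lambda>n. g n > 0) at_top"
    and ratio: "(\<lambda>n. g n / g (Suc n)) \<longlonglongrightarrow> \<rho>"
    and rho: "0 \<le> \<rho>"
    and summable_g: "summable (\<lambda>n. g n * \<rho> ^ n)"
    and self_conv: "prod_coeff g g \<in> O(g)"
    and small: "a \<in> o(g)"
  shows "(\<lambda>n. prod_coeff a g n / g n) \<longlonglongrightarrow> (\<Sum>n. a n * \<rho> ^ n)"
proof (rule LIMSEQ_approximation)
  fix e :: real assume "e > 0"
  from self_conv obtain C where C: "C > 0"
    "eventually (\<lambda>n. norm (prod_coeff g g n) \<le> C * norm (g n)) at_top"
    by (rule landau_o.bigE)
  define T where "T = (\<Sum>n. g n * \<rho> ^ n)"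
  have "T \<ge> 0" unfolding T_def using g0 rho by (intro suminf_nonneg[OF summable_g]) simp
  define \<epsilon> where "\<epsilon> = e / (C + T)"
  have "\<epsilon> > 0" "\<epsilon> * C \<le> e" "\<epsilon> * T \<le> e"
    using \<open>e > 0\<close> C(1) \<open>T \<ge> 0\<close> by (simp_all add: \<epsilon>_def field_simps)
  obtain N where N: "\<And>i. i \<ge> N \<Longrightarrow> \<bar>a i\<bar> \<le> \<epsilon> * g i"
    using landau_o.smallD[OF small \<open>\<epsilon> > 0\<close>] g0 by (auto simp: eventually_sequentially)
  have summable_a: "summable (\<lambda>n. a n * \<rho> ^ n)"
    using landau_o.small_imp_big[OF small] g0 rho summable_g by (rule summable_mult_power_bigo)
  define Y where "Y n = (\<Sum>i<N. a i * (g (n - i) / g n))" for n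
  have "Y \<longlonglongrightarrow> (\<Sum>i<N. a i * \<rho> ^ i)"
    unfolding Y_def by (intro tendsto_intros tendsto_quotient_diff_power[OF gpos ratio])
  moreover have "\<bar>(\<Sum>i<N. a i * \<rho> ^ i) - (\<Sum>n. a n * \<rho> ^ n)\<bar> \<le> e"
  proof -
    have "\<bar>(\<Sum>n. a n * \<rho> ^ n) - (\<Sum>i<N. a i * \<rho> ^ i)\<bar> \<le> \<epsilon> * T"
      unfolding T_def using summable_a summable_g g0 rho N \<open>\<epsilon> > 0\<close>
      by (intro suminf_diff_initial_abs_le) (simp_all add: abs_mult mult.assoc[symmetric] mult_right_mono)
    then show ?thesis using \<open>\<epsilon> * T \<le> e\<close> by linarith
  qed
  moreover have "eventually (\<lambda>n. \<bar>prod_coeff a g n / g n - Y n\<bar> \<le> e) at_top"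
    using C(2) gpos eventually_ge_at_top[of N]
  proof eventually_elim
    case (elim n)
    have "prod_coeff a g n / g n - Y n = (prod_coeff a g n - (\<Sum>i<N. a i * g (n - i))) / g n"
      unfolding Y_def by (simp add: sum_divide_distrib diff_divide_distrib)
    also have "\<bar>\<dots>\<bar> \<le> \<epsilon> * prod_coeff g g n / g n"
      using elim \<open>\<epsilon> > 0\<close> prod_coeff_diff_initial_abs_le[of N n g a \<epsilon>, OF _ g0 N]
      by (simp add: divide_right_mono)
    also have "\<dots> \<le> \<epsilon> * C"
      using elim \<open>\<epsilon> > 0\<close> by (simp add: pos_divide_le_eq mult_left_mono)
    finally show ?case using \<open>\<epsilon> * C \<le> e\<close> by linarith
  qed
  ultimately show "\<exists>Y l. Y \<longlonglongrightarrow> l \<and> \<bar>l - (\<Sum>n. a n * \<rho> ^ n)\<bar> \<le> e \<and>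
      eventually (\<lambda>n. \<bar>prod_coeff a g n / g n - Y n\<bar> \<le> e) at_top"
    by blast
qed

lemma prod_coeff_quotient_tendsto_suminf_quotient:
  fixes a b g :: "nat \<Rightarrow> real"
  assumes g0: "\<And>n. 0 \<le> g n"
    and gpos: "eventually (\<lambda>n. g n > 0) at_top"
    and ratio: "(\<lambda>n. g n / g (Suc n)) \<longlonglongrightarrow> \<rho>"
    and rho: "0 \<le> \<rho>"
    and summable_g: "summable (\<lambda>n. g n * \<rho> ^ n)"
    and self_conv: "prod_coeff g g \<in> O(g)"
    and a: "a \<in> o(g)" and b: "b \<in> o(g)" and b_sum: "(\<Sum>n. b n * \<rho> ^ n) \<noteq> 0"
  shows "(\<lambda>n. prod_coeff a g n / prod_coeff b g n) \<longlonglongrightarrow> (\<Sum>n. a n * \<rho> ^ n) / (\<Sum>n. b n * \<rho> ^ n)"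
proof -
  note lim = prod_coeff_quotient_tendsto_suminf[OF g0 gpos ratio rho summable_g self_conv]
  have "(\<lambda>n. (prod_coeff a g n / g n) / (prod_coeff b g n / g n))
      \<longlonglongrightarrow> (\<Sum>n. a n * \<rho> ^ n) / (\<Sum>n. b n * \<rho> ^ n)"
    using lim[OF a] lim[OF b] b_sum by (rule tendsto_divide)
  moreover have "eventually (\<lambda>n. (prod_coeff a g n / g n) / (prod_coeff b g n / g n)
      = prod_coeff a g n / prod_coeff b g n) at_top"
    using gpos by eventually_elim simp
  ultimately show ?thesis by (rule Lim_transform_eventually)
qed

lemma weighted_species_weight_nonneg: "weighted_species S tr w \<Longrightarrow> 0 \<le> w x"
  unfolding weighted_species_def by simp

lemma egf_coeff_nonneg:
  assumes "weighted_species S tr w"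
  shows "0 \<le> egf_coeff S w n"
  unfolding egf_coeff_def using weighted_species_weight_nonneg[OF assms]
  by (auto intro!: divide_nonneg_nonneg sum_nonneg)

lemma
  assumes "weighted_species S tr w" and "finite U"
  shows weighted_species_relabel_mem: "bij_betw \<sigma> U V \<Longrightarrow> x \<in> S U \<Longrightarrow> tr \<sigma> x \<in> S V"
    and weighted_species_relabel_weight: "bij_betw \<sigma> U V \<Longrightarrow> x \<in> S U \<Longrightarrow> w (tr \<sigma> x) = w x"
    and weighted_species_relabel_id: "x \<in> S U \<Longrightarrow> tr id x = x"
    and weighted_species_relabel_comp:
      "bij_betw \<sigma> U V \<Longrightarrow> bij_betw \<tau> V W \<Longrightarrow> x \<in> S U \<Longrightarrow> tr (\<tau> \<circ> \<sigma>) x = tr \<tau> (tr \<sigma> x)"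
    and weighted_species_relabel_cong:
      "x \<in> S U \<Longrightarrow> \<forall>i\<in>U. \<sigma> i = \<sigma>' i \<Longrightarrow> tr \<sigma> x = tr \<sigma>' x"
  using assms unfolding weighted_species_def by simp_all

lemma weighted_species_relabel_inverse:
  assumes S: "weighted_species S tr w" and U: "finite U"
    and \<sigma>: "bij_betw \<sigma> U V" and \<tau>: "bij_betw \<tau> V U" and inv: "\<And>i. i \<in> U \<Longrightarrow> \<tau> (\<sigma> i) = i"
    and x: "x \<in> S U"
  shows "tr \<tau> (tr \<sigma> x) = x"
proof -
  have "tr \<tau> (tr \<sigma> x) = tr (\<tau> \<circ> \<sigma>) x"
    by (rule weighted_species_relabel_comp[OF S U \<sigma> \<tau> x, symmetric])
  also have "\<dots> = tr id x"
    using inv by (intro weighted_species_relabel_cong[OF S U x]) simp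
  also have "\<dots> = x"
    by (rule weighted_species_relabel_id[OF S U x])
  finally show ?thesis .
qed

lemma weighted_species_relabel_bij_betw:
  assumes S: "weighted_species S tr w" and U: "finite U" and \<sigma>: "bij_betw \<sigma> U V"
  shows "bij_betw (tr \<sigma>) (S U) (S V)"
proof (rule bij_betw_byWitness)
  let ?\<tau> = "inv_into U \<sigma>"
  have \<tau>: "bij_betw ?\<tau> V U" using \<sigma> by (rule bij_betw_inv_into)
  have V: "finite V" using U \<sigma> bij_betw_finite by blast
  show "\<forall>x\<in>S U. tr ?\<tau> (tr \<sigma> x) = x"
    using weighted_species_relabel_inverse[OF S U \<sigma> \<tau>] \<sigma> by (simp add: bij_betw_inv_into_left)
  show "\<forall>y\<in>S V. tr \<sigma> (tr ?\<tau> y) = y"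
    using weighted_species_relabel_inverse[OF S V \<tau> \<sigma>] \<sigma> by (simp add: bij_betw_inv_into_right)
  show "tr \<sigma> ` S U \<subseteq> S V" "tr ?\<tau> ` S V \<subseteq> S U"
    using weighted_species_relabel_mem[OF S U \<sigma>] weighted_species_relabel_mem[OF S V \<tau>] by blast+
qed

lemma weighted_species_sum_relabel:
  assumes S: "weighted_species S tr w" and U: "finite U" and \<sigma>: "bij_betw \<sigma> U V"
  shows "(\<Sum>x\<in>S U. w x * h (tr \<sigma> x)) = (\<Sum>y\<in>S V. w y * h y)"
proof -
  have "(\<Sum>y\<in>S V. w y * h y) = (\<Sum>x\<in>S U. w (tr \<sigma> x) * h (tr \<sigma> x))"
    by (rule sum.reindex_bij_betw[OF weighted_species_relabel_bij_betw[OF S U \<sigma>], symmetric])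
  also have "\<dots> = (\<Sum>x\<in>S U. w x * h (tr \<sigma> x))"
    using weighted_species_relabel_weight[OF S U \<sigma>] by (intro sum.cong) auto
  finally show ?thesis by simp
qed

lemma rank_strict_mono_on:
  assumes "finite U"
  shows "strict_mono_on U (rank U)"
proof (rule strict_mono_onI)
  fix i j assume "i \<in> U" "j \<in> U" "i < j"
  then have "{k\<in>U. k \<le> i} \<subseteq> {k\<in>U. k \<le> j}" "j \<in> {k\<in>U. k \<le> j}" "j \<notin> {k\<in>U. k \<le> i}"
    by auto
  then have "{k\<in>U. k \<le> i} \<subset> {k\<in>U. k \<le> j}" by blast
  then show "rank U i < rank U j" unfolding rank_def using assms by (intro psubset_card_mono) simp_all
qed

lemma bij_betw_rank:
  assumes U: "finite U"
  shows "bij_betw (rank U) U {1..card U}"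
proof -
  have inj: "inj_on (rank U) U"
    using rank_strict_mono_on[OF U] by (rule strict_mono_on_imp_inj_on)
  have "rank U ` U \<subseteq> {1..card U}"
  proof
    fix k assume "k \<in> rank U ` U"
    then obtain i where i: "i \<in> U" "k = rank U i" by auto
    have sub: "{j\<in>U. j \<le> i} \<subseteq> U" and ne: "{j\<in>U. j \<le> i} \<noteq> {}" using i by auto
    have "0 < rank U i"
      unfolding rank_def using ne finite_subset[OF sub U] by (simp add: card_gt_0_iff)
    moreover have "rank U i \<le> card U"
      unfolding rank_def using card_mono[OF U sub] .
    ultimately show "k \<in> {1..card U}" using i by simp
  qed
  moreover have "card (rank U ` U) = card {1..card U}" using card_image[OF inj] by simp
  ultimately have "rank U ` U = {1..card U}" by (intro card_subset_eq) auto
  then show ?thesis using inj by (simp add: bij_betw_def)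
qed

definition egf_coeff_reweighted ::
  "(nat set \<Rightarrow> 'a set) \<Rightarrow> ('a \<Rightarrow> real) \<Rightarrow> (nat \<times> 'a \<Rightarrow> real) \<Rightarrow> nat \<Rightarrow> real" where
  "egf_coeff_reweighted S w h n = (\<Sum>x\<in>S {1..n}. w x * h (n, x)) / fact n"

lemma egf_coeff_reweighted_one [simp]: "egf_coeff_reweighted S w (\<lambda>_. 1) = egf_coeff S w"
  by (simp add: fun_eq_iff egf_coeff_reweighted_def egf_coeff_def)

lemma egf_coeff_reweighted_bigo:
  assumes S: "weighted_species S tr w" and h: "\<And>p. \<bar>h p\<bar> \<le> B"
  shows "egf_coeff_reweighted S w h \<in> O(egf_coeff S w)"
proof (rule bigoI[where c = B], rule always_eventually, rule allI)
  fix n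
  have "\<bar>\<Sum>x\<in>S {1..n}. w x * h (n, x)\<bar> \<le> (\<Sum>x\<in>S {1..n}. w x * B)"
    using weighted_species_weight_nonneg[OF S] h
    by (intro order.trans[OF sum_abs sum_mono]) (simp add: abs_mult mult_left_mono)
  also have "\<dots> = B * (\<Sum>x\<in>S {1..n}. w x)"
    by (simp add: sum_distrib_left mult.commute)
  finally have "\<bar>egf_coeff_reweighted S w h n\<bar> \<le> B * egf_coeff S w n"
    unfolding egf_coeff_reweighted_def egf_coeff_def by (simp add: divide_right_mono)
  then show "norm (egf_coeff_reweighted S w h n) \<le> B * norm (egf_coeff S w n)"
    using egf_coeff_nonneg[OF S] by simp
qed

lemma sum_Pow_card:
  assumes "finite A"
  shows "(\<Sum>U\<in>Pow A. \<phi> (card U)) = (\<Sum>k\<le>card A. of_nat (card A choose k) * \<phi> k)"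
proof -
  have "(\<Sum>U\<in>Pow A. \<phi> (card U)) = (\<Sum>k\<le>card A. \<Sum>U\<in>{U \<in> Pow A. card U = k}. \<phi> (card U))"
    using assms card_mono[OF assms] by (intro sum.group[symmetric]) auto
  also have "\<dots> = (\<Sum>k\<le>card A. of_nat (card A choose k) * \<phi> k)"
    using n_subsets[OF assms] by (intro sum.cong) (simp_all add: Pow_def)
  finally show ?thesis .
qed

lemma sum_prod_structs:
  assumes F: "weighted_species SF trF wF" and G: "weighted_species SG trG wG"
  shows "(\<Sum>(U, x, y)\<in>prod_structs SF SG n. wF x * wG y * h (card U, trF (rank U) x))
     = fact n * prod_coeff (egf_coeff_reweighted SF wF h) (egf_coeff SG wG) n"
proof -
  define c where "c k = (\<Sum>x\<in>SF {1..k}. wF x * h (k, x))" for k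
  define d where "d k = (\<Sum>y\<in>SG {1..k}. wG y)" for k
  have finF: "finite (SF U)" and finG: "finite (SG U)" if "finite U" for U
    using F G that unfolding weighted_species_def by simp_all
  have factor: "(\<Sum>(x, y)\<in>SF U \<times> SG ({1..n} - U). wF x * wG y * h (card U, trF (rank U) x))
      = c (card U) * d (n - card U)" if "U \<subseteq> {1..n}" for U
  proof -
    have U: "finite U" using that finite_subset by blast
    have "(\<Sum>(x, y)\<in>SF U \<times> SG ({1..n} - U). wF x * wG y * h (card U, trF (rank U) x))
        = (\<Sum>x\<in>SF U. wF x * h (card U, trF (rank U) x)) * (\<Sum>y\<in>SG ({1..n} - U). wG y * 1)"
      unfolding sum_product sum.cartesian_product by (intro sum.cong) (auto simp: mult_ac)
    also have "\<dots> = c (card U) * d (n - card U)"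
      unfolding c_def d_def
      using weighted_species_sum_relabel[OF F U bij_betw_rank[OF U], of "\<lambda>x. h (card U, x)"]
        weighted_species_sum_relabel[OF G _ bij_betw_rank, of "{1..n} - U" "\<lambda>_. 1"] that U
      by (simp add: card_Diff_subset)
    finally show ?thesis .
  qed
  have "prod_structs SF SG n = (SIGMA U:Pow {1..n}. SF U \<times> SG ({1..n} - U))"
    unfolding prod_structs_def by auto
  then have "(\<Sum>(U, x, y)\<in>prod_structs SF SG n. wF x * wG y * h (card U, trF (rank U) x))
      = (\<Sum>U\<in>Pow {1..n}. \<Sum>(x, y)\<in>SF U \<times> SG ({1..n} - U). wF x * wG y * h (card U, trF (rank U) x))"
    by (subst sum.Sigma) (auto intro!: finF finG dest: rev_finite_subset[OF finite_atLeastAtMost])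
  also have "\<dots> = (\<Sum>U\<in>Pow {1..n}. c (card U) * d (n - card U))"
    using factor by (intro sum.cong) auto
  also have "\<dots> = (\<Sum>k\<le>n. of_nat (n choose k) * (c k * d (n - k)))"
    using sum_Pow_card[of "{1..n}" "\<lambda>k. c k * d (n - k)"] by simp
  also have "\<dots> = fact n * prod_coeff (egf_coeff_reweighted SF wF h) (egf_coeff SG wG) n"
    unfolding prod_coeff_def sum_distrib_left
    by (intro sum.cong) (simp_all add: binomial_fact egf_coeff_reweighted_def egf_coeff_def
        c_def d_def field_simps)
  finally show ?thesis .
qed

lemma comp_expect_eq_prod_coeff_quotient:
  assumes "weighted_species SF trF wF" and "weighted_species SG trG wG"
  shows "comp_expect SF trF wF SG wG n h =
    prod_coeff (egf_coeff_reweighted SF wF h) (egf_coeff SG wG) n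
      / prod_coeff (egf_coeff SF wF) (egf_coeff SG wG) n"
  using sum_prod_structs[OF assms, where n=n and h=h] sum_prod_structs[OF assms, where n=n and h="\<lambda>_. 1"]
  by (simp add: comp_expect_def)

lemma boltzmann_expect_eq_suminf_quotient:
  assumes "summable (\<lambda>n. egf_coeff_reweighted S w h n * \<rho> ^ n)"
  shows "boltzmann_expect S w \<rho> h = (\<Sum>n. egf_coeff_reweighted S w h n * \<rho> ^ n) / egf_val S w \<rho>"
proof -
  have "(\<Sum>x\<in>S {1..n}. h (n, x) * w x * \<rho> ^ n / (fact n * egf_val S w \<rho>))
      = egf_coeff_reweighted S w h n * \<rho> ^ n / egf_val S w \<rho>" for n
    unfolding egf_coeff_reweighted_def sum_divide_distrib sum_distrib_right
    by (intro sum.cong) (simp_all add: field_simps)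
  then show ?thesis
    unfolding boltzmann_expect_def using suminf_divide[OF assms] by simp
qed

theorem proposition5:
  fixes SF :: "nat set \<Rightarrow> 'a set" and trF :: "(nat \<Rightarrow> nat) \<Rightarrow> 'a \<Rightarrow> 'a" and wF :: "'a \<Rightarrow> real"
    and SG :: "nat set \<Rightarrow> 'b set" and trG :: "(nat \<Rightarrow> nat) \<Rightarrow> 'b \<Rightarrow> 'b" and wG :: "'b \<Rightarrow> real"
    and \<rho> :: real
  assumes F: "weighted_species SF trF wF"
    and G: "weighted_species SG trG wG"
    and fpos: "eventually (\<lambda>n. egf_coeff SF wF n > 0) at_top"
    and gpos: "eventually (\<lambda>n. egf_coeff SG wG n > 0) at_top"
    and rad: "conv_radius (egf_coeff SG wG) = ereal \<rho>"
    and rho_pos: "0 < \<rho>"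
    and ratio: "(\<lambda>n. egf_coeff SG wG n / egf_coeff SG wG (Suc n)) \<longlonglongrightarrow> \<rho>"
    and Gfin: "summable (\<lambda>n. egf_coeff SG wG n * \<rho> ^ n)"
    and conv: "(\<lambda>n. prod_coeff (egf_coeff SG wG) (egf_coeff SG wG) n / egf_coeff SG wG n)
                 \<longlonglongrightarrow> 2 * egf_val SG wG \<rho>"
    and small: "egf_coeff SF wF \<in> o(egf_coeff SG wG)"
  shows "(prod_coeff (egf_coeff SF wF) (egf_coeff SG wG)
           \<sim>[at_top] (\<lambda>n. egf_val SF wF \<rho> * egf_coeff SG wG n)) \<and>
         (\<forall>h :: nat \<times> 'a \<Rightarrow> real. (\<exists>B. \<forall>p. \<bar>h p\<bar> \<le> B) \<longrightarrow>
           (\<lambda>n. comp_expect SF trF wF SG wG n h) \<longlonglongrightarrow> boltzmann_expect SF wF \<rho> h)"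
proof -
  let ?f = "egf_coeff SF wF" and ?g = "egf_coeff SG wG"
  note g0 = egf_coeff_nonneg[OF G] and rho = less_imp_le[OF rho_pos]
  have self_conv: "prod_coeff ?g ?g \<in> O(?g)"
    using gpos by (intro bigoI_tendsto[OF conv]) (auto elim: eventually_mono)
  have smallo: "a \<in> o(?g)" and summable: "summable (\<lambda>n. a n * \<rho> ^ n)" if "a \<in> O(?f)" for a
    using that small landau_o.big_small_trans
    by (blast, intro summable_mult_power_bigo[OF _ g0 rho Gfin] landau_o.small_imp_big)
  have F_pos: "egf_val SF wF \<rho> > 0"
  proof -
    obtain i where "?f i > 0" using fpos by (auto simp: eventually_sequentially)
    then show ?thesis
      unfolding egf_val_def using summable[OF landau_o.big_refl] egf_coeff_nonneg[OF F] rho_pos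
      by (intro suminf_pos2[of _ i]) auto
  qed
  note lim = prod_coeff_quotient_tendsto_suminf[OF g0 gpos ratio rho Gfin self_conv]
    and lim_quotient = prod_coeff_quotient_tendsto_suminf_quotient[OF g0 gpos ratio rho Gfin self_conv]
  show ?thesis
  proof (intro conjI allI impI)
    show "prod_coeff ?f ?g \<sim>[at_top] (\<lambda>n. egf_val SF wF \<rho> * ?g n)"
      using lim[OF small] F_pos by (intro asymp_equivI'_const) (auto simp: egf_val_def)
  next
    fix h :: "nat \<times> 'a \<Rightarrow> real" assume "\<exists>B. \<forall>p. \<bar>h p\<bar> \<le> B"
    then have h: "egf_coeff_reweighted SF wF h \<in> O(?f)"
      by (metis egf_coeff_reweighted_bigo[OF F])
    show "(\<lambda>n. comp_expect SF trF wF SG wG n h) \<longlonglongrightarrow> boltzmann_expect SF wF \<rho> h"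
      using F_pos
      unfolding comp_expect_eq_prod_coeff_quotient[OF F G]
        boltzmann_expect_eq_suminf_quotient[OF summable[OF h]] egf_val_def
      by (intro lim_quotient smallo[OF h] small) simp
  qed
qed

end
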